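(* Let $w$ be a decreasing weight on $(0,\infty)$ such that $w(\infty):=\lim_{t\to\infty}w(t)=0$. Then for every $1\le q<\infty$ there exists a weight $w_q$ such that $$\Big(\int_0^r w(x)\,dx\Big)^q\approx \int_0^r w_q(x)\,dx + r^q\int_r^\infty w_q(x)\,\frac{dx}{x^q},$$ i.e. there is a constant $C>1$, independent of $r$, such that each side is at most $C$ times the other for every $r>0$.
   Context: A weight is a nonnegative measurable function on $(0,\infty)$ that is locally integrable. "Decreasing" means nonincreasing. *)

theory Defs
  imports "HOL-Analysis.Analysis"
begin

definition weight :: "(real \<Rightarrow> real) \<Rightarrow> bool" where
  "weight w \<longleftrightarrow> (\<forall>x>0. 0 \<le> w x) \<and> set_borel_measurable lborel {0<..} w \<and>
     (\<forall>a b. 0 < a \<longrightarrow> set_integrable lborel {a..b} w)"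

definition decreasing_on_pos :: "(real \<Rightarrow> real) \<Rightarrow> bool" where
  "decreasing_on_pos w \<longleftrightarrow> (\<forall>x y. 0 < x \<longrightarrow> x \<le> y \<longrightarrow> w y \<le> w x)"

definition epowr :: "ennreal \<Rightarrow> real \<Rightarrow> ennreal" where
  "epowr x q = (if x = \<infinity> then \<infinity> else ennreal (enn2real x powr q))"

end

theory Submission
  imports Defs
begin

text \<open>
  Let W x be the integral of w over (0, x]. As w decreases, W x / x decreases, so
  g x = (W x / x) powr (q - 1) * w x is decreasing and tends to 0; the new weight is
  wq x = x powr (q - 1) * (g x - g (2 x)).
  The tail integral of wq x / x powr q over (r, infinity) telescopes to the integral of
  g x / x over (r, 2 r], which is at most g r <= (W r / r) powr q.
  The integral G r of x powr (q - 1) * g x = W x powr (q - 1) * w x over (0, r] lies between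
  (W r / 4) powr q and W r powr q, and the substitution x = 2 y gives
  2 powr q * G r = 2 powr q * (integral of wq over (0, r]) + G (2 r).
  Since G (2 r) exceeds G r by at most (2 r) powr q times the telescoped tail, this yields
  G r <= 2 powr q * RHS and hence W r powr q <= 8 powr q * RHS.
  If w is not integrable near 0, both sides are infinite and wq = w will do.
\<close>

section \<open>Integrals over half-open intervals\<close>

lemma nn_integral_Ioc_split:
  fixes f :: "real \<Rightarrow> ennreal"
  assumes [measurable]: "f \<in> borel_measurable borel" and "a \<le> b" "b \<le> c"
  shows "(\<integral>\<^sup>+x\<in>{a<..c}. f x \<partial>lborel)
         = (\<integral>\<^sup>+x\<in>{a<..b}. f x \<partial>lborel) + (\<integral>\<^sup>+x\<in>{b<..c}. f x \<partial>lborel)"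
proof -
  have "{a<..c} = {a<..b} \<union> {b<..c}" using assms by auto
  then show ?thesis by (simp add: nn_integral_disjoint_pair)
qed

lemma nn_integral_Ioc_le_const:
  assumes "a \<le> b" "\<And>x. a < x \<Longrightarrow> x \<le> b \<Longrightarrow> f x \<le> c"
  shows "(\<integral>\<^sup>+x\<in>{a<..b}. ennreal (f x) \<partial>lborel) \<le> ennreal (c * (b - a))"
proof -
  have "(\<integral>\<^sup>+x\<in>{a<..b}. ennreal (f x) \<partial>lborel)
      \<le> (\<integral>\<^sup>+x. ennreal c * indicator {a<..b} x \<partial>lborel)"
    by (intro nn_integral_mono) (auto simp: assms ennreal_leI split: split_indicator)
  also have "\<dots> = ennreal c * ennreal (b - a)"
    by (subst nn_integral_cmult_indicator) (use assms in auto)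
  also have "\<dots> \<le> ennreal (c * (b - a))"
    by (cases "c \<ge> 0") (auto simp: ennreal_mult' ennreal_neg)
  finally show ?thesis .
qed

lemma nn_integral_Ioc_ge_const:
  assumes "a \<le> b" "0 \<le> c" "\<And>x. a < x \<Longrightarrow> x \<le> b \<Longrightarrow> c \<le> f x"
  shows "ennreal (c * (b - a)) \<le> (\<integral>\<^sup>+x\<in>{a<..b}. ennreal (f x) \<partial>lborel)"
proof -
  have "ennreal (c * (b - a)) = (\<integral>\<^sup>+x. ennreal c * indicator {a<..b} x \<partial>lborel)"
    using assms by (subst nn_integral_cmult_indicator) (auto simp: ennreal_mult)
  also have "\<dots> \<le> (\<integral>\<^sup>+x\<in>{a<..b}. ennreal (f x) \<partial>lborel)"
    by (intro nn_integral_mono) (auto simp: assms ennreal_leI split: split_indicator)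
  finally show ?thesis .
qed

lemma nn_integral_Ioc_dilate:
  fixes f :: "real \<Rightarrow> ennreal" and c :: real
  assumes [measurable]: "f \<in> borel_measurable borel" and "0 < c"
  shows "(\<integral>\<^sup>+x\<in>{c * a<..c * b}. f x \<partial>lborel)
         = ennreal c * (\<integral>\<^sup>+y\<in>{a<..b}. f (c * y) \<partial>lborel)"
proof -
  have "indicator {c * a<..c * b} (c * y) = (indicator {a<..b} y :: ennreal)" for y
    using \<open>0 < c\<close> by (simp split: split_indicator)
  then show ?thesis
    using nn_integral_real_affine[of "\<lambda>x. f x * indicator {c * a<..c * b} x" c 0] \<open>0 < c\<close> by simp
qed

lemma nn_integral_Ioc_dilate_div:
  fixes g :: "real \<Rightarrow> real" and c :: real
  assumes [measurable]: "g \<in> borel_measurable borel" and "0 < c"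
  shows "(\<integral>\<^sup>+y\<in>{a<..b}. ennreal (g (c * y) / y) \<partial>lborel)
         = (\<integral>\<^sup>+x\<in>{c * a<..c * b}. ennreal (g x / x) \<partial>lborel)"
proof -
  have "(\<integral>\<^sup>+y\<in>{a<..b}. ennreal (g (c * y) / y) \<partial>lborel)
      = (\<integral>\<^sup>+y. ennreal c * (ennreal (g (c * y) / (c * y)) * indicator {a<..b} y) \<partial>lborel)"
  proof (intro nn_integral_cong)
    fix y :: real
    have "g (c * y) / y = c * (g (c * y) / (c * y))"
      using \<open>0 < c\<close> by (cases "y = 0") simp_all
    then have "ennreal (g (c * y) / y) = ennreal c * ennreal (g (c * y) / (c * y))"
      using \<open>0 < c\<close> by (metis ennreal_mult' less_imp_le)
    then show "ennreal (g (c * y) / y) * indicator {a<..b} y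
        = ennreal c * (ennreal (g (c * y) / (c * y)) * indicator {a<..b} y)"
      by (simp add: mult.assoc)
  qed
  also have "\<dots> = (\<integral>\<^sup>+x\<in>{c * a<..c * b}. ennreal (g x / x) \<partial>lborel)"
    using nn_integral_Ioc_dilate[of "\<lambda>x. ennreal (g x / x)" c a b] \<open>0 < c\<close>
    by (simp add: nn_integral_cmult)
  finally show ?thesis .
qed

lemma nn_integral_Ioc_zero_finite_iff:
  fixes w :: "real \<Rightarrow> real"
  assumes [measurable]: "w \<in> borel_measurable borel"
    and antimono: "\<And>x y. 0 < x \<Longrightarrow> x \<le> y \<Longrightarrow> w y \<le> w x"
    and "0 < r" "0 < s"
  shows "(\<integral>\<^sup>+x\<in>{0<..r}. ennreal (w x) \<partial>lborel) < \<infinity>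
         \<longleftrightarrow> (\<integral>\<^sup>+x\<in>{0<..s}. ennreal (w x) \<partial>lborel) < \<infinity>"
proof -
  have *: "(\<integral>\<^sup>+x\<in>{0<..b}. ennreal (w x) \<partial>lborel) < \<infinity>
      \<longleftrightarrow> (\<integral>\<^sup>+x\<in>{0<..a}. ennreal (w x) \<partial>lborel) < \<infinity>"
    if "0 < a" "a \<le> b" for a b
  proof -
    have "(\<integral>\<^sup>+x\<in>{a<..b}. ennreal (w x) \<partial>lborel) \<le> ennreal (w a * (b - a))"
      using that by (intro nn_integral_Ioc_le_const) (auto intro: antimono)
    then have "(\<integral>\<^sup>+x\<in>{a<..b}. ennreal (w x) \<partial>lborel) < \<infinity>"
      by (rule le_less_trans) simp
    moreover have "(\<integral>\<^sup>+x\<in>{0<..b}. ennreal (w x) \<partial>lborel)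
        = (\<integral>\<^sup>+x\<in>{0<..a}. ennreal (w x) \<partial>lborel)
          + (\<integral>\<^sup>+x\<in>{a<..b}. ennreal (w x) \<partial>lborel)"
      using that by (intro nn_integral_Ioc_split) auto
    ultimately show ?thesis
      by simp
  qed
  show ?thesis
  proof (cases "r \<le> s")
    case True
    then show ?thesis using *[of r s] \<open>0 < r\<close> by simp
  next
    case False
    then show ?thesis using *[of s r] \<open>0 < s\<close> by simp
  qed
qed

lemma nn_integral_Ioc_dyadic_telescope:
  fixes g :: "real \<Rightarrow> real"
  assumes [measurable]: "g \<in> borel_measurable borel"
    and nonneg: "\<And>x. 0 < x \<Longrightarrow> 0 \<le> g x"
    and antimono: "\<And>x y. 0 < x \<Longrightarrow> x \<le> y \<Longrightarrow> g y \<le> g x"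
    and "0 < r" "2 * r \<le> M"
  shows "(\<integral>\<^sup>+y\<in>{r<..M}. ennreal ((g y - g (2 * y)) / y) \<partial>lborel)
           + (\<integral>\<^sup>+y\<in>{M<..2 * M}. ennreal (g y / y) \<partial>lborel)
         = (\<integral>\<^sup>+y\<in>{r<..2 * r}. ennreal (g y / y) \<partial>lborel)"
proof -
  define I where "I a b = (\<integral>\<^sup>+y\<in>{a<..b}. ennreal (g y / y) \<partial>lborel)" for a b
  define D where "D = (\<integral>\<^sup>+y\<in>{r<..M}. ennreal ((g y - g (2 * y)) / y) \<partial>lborel)"
  have split: "I a c = I a b + I b c" if "a \<le> b" "b \<le> c" for a b c
    unfolding I_def using that by (intro nn_integral_Ioc_split) auto
  have "I r M
      = (\<integral>\<^sup>+y\<in>{r<..M}. ennreal ((g y - g (2 * y)) / y) + ennreal (g (2 * y) / y) \<partial>lborel)"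
    unfolding I_def
  proof (intro nn_integral_cong)
    fix y :: real
    show "ennreal (g y / y) * indicator {r<..M} y
        = (ennreal ((g y - g (2 * y)) / y) + ennreal (g (2 * y) / y)) * indicator {r<..M} y"
    proof (cases "r < y \<and> y \<le> M")
      case True
      then have "0 \<le> (g y - g (2 * y)) / y" "0 \<le> g (2 * y) / y"
        using antimono[of y "2 * y"] nonneg[of "2 * y"] \<open>0 < r\<close> by auto
      then show ?thesis
        using True by (simp add: ennreal_plus[symmetric] diff_divide_distrib del: ennreal_plus)
    qed simp
  qed
  also have "\<dots> = D + (\<integral>\<^sup>+y\<in>{r<..M}. ennreal (g (2 * y) / y) \<partial>lborel)"
    unfolding D_def by (subst nn_integral_add[symmetric]) (auto simp: distrib_right)
  also have "(\<integral>\<^sup>+y\<in>{r<..M}. ennreal (g (2 * y) / y) \<partial>lborel) = I (2 * r) (2 * M)"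
    unfolding I_def by (rule nn_integral_Ioc_dilate_div) auto
  finally have "I r M = I (2 * r) M + (D + I M (2 * M))"
    using split[of "2 * r" M "2 * M"] assms by (simp add: ac_simps)
  moreover have "I r M = I (2 * r) M + I r (2 * r)"
    using split[of r "2 * r" M] assms by (simp add: add.commute)
  moreover have "I (2 * r) M \<noteq> \<infinity>"
  proof -
    have "I (2 * r) M \<le> ennreal (g (2 * r) / (2 * r) * (M - 2 * r))"
      unfolding I_def using assms
      by (intro nn_integral_Ioc_le_const) (auto intro!: frac_le antimono nonneg)
    then show ?thesis by (auto simp: top_unique)
  qed
  ultimately have "D + I M (2 * M) = I r (2 * r)"
    by (simp add: ennreal_add_left_cancel)
  then show ?thesis
    unfolding D_def I_def .
qed

lemma nn_integral_Ioi_dyadic_telescope: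
  fixes g :: "real \<Rightarrow> real"
  assumes [measurable]: "g \<in> borel_measurable borel"
    and nonneg: "\<And>x. 0 < x \<Longrightarrow> 0 \<le> g x"
    and antimono: "\<And>x y. 0 < x \<Longrightarrow> x \<le> y \<Longrightarrow> g y \<le> g x"
    and lim: "(g \<longlongrightarrow> 0) at_top" and "0 < r"
  shows "(\<integral>\<^sup>+y\<in>{r<..}. ennreal ((g y - g (2 * y)) / y) \<partial>lborel)
         = (\<integral>\<^sup>+y\<in>{r<..2 * r}. ennreal (g y / y) \<partial>lborel)"
    (is "?T = ?I")
proof (rule antisym)
  define f where "f n y = ennreal ((g y - g (2 * y)) / y) * indicator {r<..2 * r + real n} y"
    for n :: nat and y
  have "incseq f"
    by (intro incseq_SucI le_funI) (auto simp: f_def split: split_indicator)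
  have "(SUP n. f n y) = ennreal ((g y - g (2 * y)) / y) * indicator {r<..} y" for y
  proof (rule antisym)
    show "(SUP n. f n y) \<le> ennreal ((g y - g (2 * y)) / y) * indicator {r<..} y"
      by (intro SUP_least) (auto simp: f_def split: split_indicator)
    obtain n :: nat where "y \<le> real n"
      using real_arch_simple by blast
    then have "f n y = ennreal ((g y - g (2 * y)) / y) * indicator {r<..} y"
      using \<open>0 < r\<close> by (auto simp: f_def split: split_indicator)
    then show "ennreal ((g y - g (2 * y)) / y) * indicator {r<..} y \<le> (SUP n. f n y)"
      by (metis SUP_upper UNIV_I)
  qed
  then have "?T = (\<integral>\<^sup>+y. (SUP n. f n y) \<partial>lborel)"
    by simp
  also have "\<dots> = (SUP n. (\<integral>\<^sup>+y. f n y \<partial>lborel))"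
    by (rule nn_integral_monotone_convergence_SUP[OF \<open>incseq f\<close>]) (unfold f_def, measurable)
  also have "\<dots> \<le> ?I"
  proof (intro SUP_least)
    fix n :: nat
    show "(\<integral>\<^sup>+y. f n y \<partial>lborel) \<le> ?I"
      unfolding f_def using \<open>0 < r\<close>
      by (subst nn_integral_Ioc_dyadic_telescope[OF assms(1-3), of r "2 * r + real n", symmetric])
         auto
  qed
  finally show "?T \<le> ?I" .
next
  show "?I \<le> ?T"
  proof (rule ennreal_le_epsilon)
    fix e :: real
    assume "0 < e"
    then have "\<forall>\<^sub>F M in at_top. 2 * r \<le> M \<and> g M < e"
      using order_tendstoD(2)[OF lim \<open>0 < e\<close>] eventually_ge_at_top[of "2 * r"]
      by (simp add: eventually_conj_iff)
    then obtain M where M: "2 * r \<le> M" "g M < e"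
      by (auto dest: eventually_happens)
    have "?I = (\<integral>\<^sup>+y\<in>{r<..M}. ennreal ((g y - g (2 * y)) / y) \<partial>lborel)
               + (\<integral>\<^sup>+y\<in>{M<..2 * M}. ennreal (g y / y) \<partial>lborel)"
      using nn_integral_Ioc_dyadic_telescope[OF assms(1-3) \<open>0 < r\<close> M(1)] by simp
    also have "(\<integral>\<^sup>+y\<in>{r<..M}. ennreal ((g y - g (2 * y)) / y) \<partial>lborel) \<le> ?T"
      by (intro nn_integral_mono) (auto split: split_indicator)
    also have "(\<integral>\<^sup>+y\<in>{M<..2 * M}. ennreal (g y / y) \<partial>lborel) \<le> ennreal (g M / M * (2 * M - M))"
      using M \<open>0 < r\<close> by (intro nn_integral_Ioc_le_const) (auto intro!: frac_le antimono nonneg)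
    also have "g M / M * (2 * M - M) \<le> e"
      using M \<open>0 < r\<close> by simp
    finally show "?I \<le> ?T + ennreal e"
      by (simp add: add_left_mono ennreal_leI)
  qed
qed

section \<open>The primitive of a decreasing weight\<close>

locale decreasing_weight =
  fixes w :: "real \<Rightarrow> real" and q :: real
  assumes measurable_w [measurable]: "w \<in> borel_measurable borel"
    and nonneg: "\<And>x. 0 < x \<Longrightarrow> 0 \<le> w x"
    and antimono: "\<And>x y. 0 < x \<Longrightarrow> x \<le> y \<Longrightarrow> w y \<le> w x"
    and tendsto_zero: "(w \<longlongrightarrow> 0) at_top"
    and one_le_q: "1 \<le> q"
    and integrable_at_zero: "(\<integral>\<^sup>+x\<in>{0<..1}. ennreal (w x) \<partial>lborel) < \<infinity>"
begin

definition W :: "real \<Rightarrow> real" where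
  "W x = enn2real (\<integral>\<^sup>+y\<in>{0<..x}. ennreal (w y) \<partial>lborel)"

lemma nn_integral_eq_W: "(\<integral>\<^sup>+y\<in>{0<..x}. ennreal (w y) \<partial>lborel) = ennreal (W x)"
proof (cases "0 < x")
  case True
  then have "(\<integral>\<^sup>+y\<in>{0<..x}. ennreal (w y) \<partial>lborel) < \<infinity>"
    using nn_integral_Ioc_zero_finite_iff[OF measurable_w antimono, of x 1] integrable_at_zero
    by simp
  then show ?thesis
    by (simp add: W_def less_top)
qed (simp add: W_def)

lemma W_nonneg: "0 \<le> W x"
  by (simp add: W_def)

lemma W_nonpos_eq_0: "x \<le> 0 \<Longrightarrow> W x = 0"
  by (simp add: W_def)

lemma W_add:
  assumes "0 \<le> a" "a \<le> b"
  shows "ennreal (W b) = ennreal (W a) + (\<integral>\<^sup>+y\<in>{a<..b}. ennreal (w y) \<partial>lborel)"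
  using nn_integral_Ioc_split[of "\<lambda>x. ennreal (w x)" 0 a b] assms
  by (simp add: nn_integral_eq_W)

lemma mono_W: "mono W"
proof
  fix a b :: real
  assume "a \<le> b"
  show "W a \<le> W b"
  proof (cases "0 \<le> a")
    case True
    then have "ennreal (W a) \<le> ennreal (W b)"
      using W_add[OF True \<open>a \<le> b\<close>] by simp
    then show ?thesis
      by (simp add: W_nonneg)
  qed (simp add: W_nonpos_eq_0 W_nonneg)
qed

lemma measurable_W [measurable]: "W \<in> borel_measurable borel"
  by (rule borel_measurable_mono[OF mono_W])

lemma mult_w_le_W:
  assumes "0 < x"
  shows "x * w x \<le> W x"
proof -
  have "ennreal (w x * (x - 0)) \<le> ennreal (W x)"
    unfolding nn_integral_eq_W[symmetric] using assms nonneg[of x]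
    by (intro nn_integral_Ioc_ge_const) (auto intro: antimono)
  then show ?thesis
    by (simp add: W_nonneg mult.commute)
qed

lemma nn_integral_Ioc_eq_W_diff:
  assumes "0 \<le> a" "a \<le> b"
  shows "(\<integral>\<^sup>+y\<in>{a<..b}. ennreal (w y) \<partial>lborel) = ennreal (W b - W a)"
proof -
  have "ennreal (W b - W a) = ennreal (W b) - ennreal (W a)"
    by (simp add: ennreal_minus W_nonneg)
  then show ?thesis
    by (simp add: W_add[OF assms])
qed

lemma W_le_add:
  assumes "0 < a" "a \<le> b"
  shows "W b \<le> W a + w a * (b - a)"
proof -
  have "ennreal (W b - W a) \<le> ennreal (w a * (b - a))"
    unfolding nn_integral_Ioc_eq_W_diff[symmetric, OF less_imp_le[OF assms(1)] assms(2)] using assms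
    by (intro nn_integral_Ioc_le_const) (auto intro: antimono)
  then show ?thesis
    using assms nonneg[of a] by simp
qed

lemma W_div_antimono:
  assumes "0 < x" "x \<le> y"
  shows "W y / y \<le> W x / x"
proof -
  have "W y \<le> W x + w x * (y - x)"
    using W_le_add assms by blast
  also have "\<dots> \<le> W x + W x / x * (y - x)"
    using mult_w_le_W[of x] assms by (intro add_left_mono mult_right_mono) (auto simp: field_simps)
  also have "\<dots> = W x / x * y"
    using assms by (simp add: field_simps)
  finally show ?thesis
    using assms by (simp add: divide_le_eq)
qed

lemma ex_W_dyadic_less:
  assumes "0 < r" "0 < e"
  shows "\<exists>n::nat. W (r / 2 ^ n) < e"
proof -
  define f where "f n y = ennreal (w y) * indicator {0<..r / 2 ^ n} y" for n :: nat and y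
  have "decseq f"
  proof (intro decseq_SucI le_funI)
    fix n :: nat and y :: real
    have "r / 2 ^ Suc n \<le> r / 2 ^ n"
      using \<open>0 < r\<close> by (intro divide_left_mono) auto
    then show "f (Suc n) y \<le> f n y"
      by (auto simp: f_def split: split_indicator)
  qed
  have INF_f: "(INF n. f n y) = 0" for y
  proof -
    obtain n where "r / 2 ^ n < y \<or> y \<le> 0"
    proof (cases "0 < y")
      case True
      then obtain n where "(1 / 2 :: real) ^ n < y / r"
        using real_arch_pow_inv[of "y / r" "1 / 2"] \<open>0 < r\<close> by auto
      then show ?thesis
        using that[of n] \<open>0 < r\<close> by (simp add: field_simps)
    qed auto
    then have "f n y = 0"
      by (auto simp: f_def)
    then show ?thesis
      by (metis INF_lower UNIV_I antisym zero_le)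
  qed
  have integral_f: "(\<integral>\<^sup>+y. f n y \<partial>lborel) = ennreal (W (r / 2 ^ n))" for n
    unfolding f_def by (rule nn_integral_eq_W)
  have "(\<integral>\<^sup>+y. (INF n. f n y) \<partial>lborel) = (INF n. (\<integral>\<^sup>+y. f n y \<partial>lborel))"
  proof (rule nn_integral_monotone_convergence_INF_decseq[OF \<open>decseq f\<close>])
    show "f n \<in> borel_measurable lborel" for n
      unfolding f_def by measurable
    show "(\<integral>\<^sup>+y. f 0 y \<partial>lborel) < \<infinity>"
      by (simp add: integral_f)
  qed
  then have "(INF n. ennreal (W (r / 2 ^ n))) = 0"
    by (simp add: INF_f integral_f)
  then have "(INF n. ennreal (W (r / 2 ^ n))) < ennreal e"
    using \<open>0 < e\<close> by simp
  then obtain n where "ennreal (W (r / 2 ^ n)) < ennreal e"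
    by (auto simp: INF_less_iff)
  then show ?thesis
    using W_nonneg by (auto simp: ennreal_less_iff)
qed

lemma W_quarter_point:
  assumes "0 < r"
  obtains x where "0 < x" "x \<le> r" "W r / 4 \<le> W x" "W x \<le> W r / 2"
proof (cases "W r = 0")
  case True
  then show ?thesis
    using that[of r] assms by simp
next
  case False
  then have "0 < W r"
    using W_nonneg[of r] by simp
  \<comment> \<open>take the first dyadic point \<open>x = r / 2 ^ n\<close> with \<open>W x \<le> W r / 2\<close>; since
    \<open>W (2 * x) \<le> 2 * W x\<close>, it cannot have dropped below \<open>W r / 4\<close>\<close>
  define P where "P n \<longleftrightarrow> W (r / 2 ^ n) \<le> W r / 2" for n :: nat
  define n where "n = (LEAST n. P n)"
  obtain n0 where "W (r / 2 ^ n0) < W r / 2"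
    using ex_W_dyadic_less[OF assms, of "W r / 2"] \<open>0 < W r\<close> by auto
  then have "P n"
    unfolding n_def by (intro LeastI[of P n0]) (simp add: P_def)
  moreover have "\<not> P 0"
    using \<open>0 < W r\<close> by (simp add: P_def)
  ultimately obtain m where "n = Suc m"
    by (cases n) auto
  then have "m < (LEAST n. P n)"
    by (simp add: n_def[symmetric])
  then have "\<not> P m"
    by (rule not_less_Least)
  define x where "x = r / 2 ^ n"
  have "0 < x" "x \<le> r"
    using assms by (auto simp: x_def field_simps)
  have "r / 2 ^ m = 2 * x"
    by (simp add: x_def \<open>n = Suc m\<close>)
  moreover have "W (2 * x) \<le> 2 * W x"
    using W_div_antimono[of x "2 * x"] \<open>0 < x\<close> by (simp add: divide_le_eq)
  ultimately have "W r / 4 \<le> W x"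
    using \<open>\<not> P m\<close> by (simp add: P_def)
  moreover have "W x \<le> W r / 2"
    using \<open>P n\<close> by (simp add: P_def x_def)
  ultimately show ?thesis
    using that \<open>0 < x\<close> \<open>x \<le> r\<close> by blast
qed

section \<open>The auxiliary function g and the weight wq\<close>

definition g :: "real \<Rightarrow> real" where
  "g x = (W x / x) powr (q - 1) * w x"

lemma measurable_g [measurable]: "g \<in> borel_measurable borel"
  unfolding g_def[abs_def] by measurable

lemma g_nonneg: "0 < x \<Longrightarrow> 0 \<le> g x"
  by (simp add: g_def nonneg)

lemma g_antimono:
  assumes "0 < x" "x \<le> y"
  shows "g y \<le> g x"
  unfolding g_def using assms W_div_antimono[OF assms] one_le_q antimono[OF assms] nonneg[of y]
  by (intro mult_mono powr_mono2) (auto simp: W_nonneg)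

lemma powr_mult_g:
  assumes "0 < x"
  shows "x powr (q - 1) * g x = W x powr (q - 1) * w x"
  unfolding g_def using assms by (simp add: powr_mult[symmetric] mult.assoc[symmetric])

lemma powr_mult_g_le:
  assumes "0 < r"
  shows "r powr q * g r \<le> W r powr q"
proof -
  have "g r \<le> (W r / r) powr (q - 1) * (W r / r)"
    unfolding g_def using mult_w_le_W[OF assms] assms
    by (intro mult_left_mono) (auto simp: field_simps)
  also have "\<dots> = (W r / r) powr q"
    using powr_add[of "W r / r" "q - 1" 1] W_nonneg[of r] assms by simp
  finally show ?thesis
    using assms W_nonneg[of r]
    by (simp add: powr_divide mult_left_mono field_simps)
qed

lemma g_tendsto_zero: "(g \<longlongrightarrow> 0) at_top"
proof (rule tendsto_sandwich)
  show "\<forall>\<^sub>F x in at_top. 0 \<le> g x"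
    using eventually_gt_at_top[of 0] by eventually_elim (rule g_nonneg)
  show "\<forall>\<^sub>F x in at_top. g x \<le> W 1 powr (q - 1) * w x"
    using eventually_ge_at_top[of 1]
  proof eventually_elim
    case (elim x)
    then have "(W x / x) powr (q - 1) \<le> (W 1 / 1) powr (q - 1)"
      using W_div_antimono[of 1 x] one_le_q by (intro powr_mono2) (auto simp: W_nonneg)
    then show ?case
      unfolding g_def using nonneg[of x] elim by (simp add: mult_right_mono)
  qed
  show "((\<lambda>x. W 1 powr (q - 1) * w x) \<longlongrightarrow> 0) at_top"
    using tendsto_mult_right_zero[OF tendsto_zero] .
qed simp

text \<open>By \<open>powr_mult_g\<close>, \<open>G r\<close> is the integral of \<open>W powr (q - 1) * w\<close> over \<open>(0, r]\<close>,
  a stand-in for \<open>W r powr q / q\<close>.\<close>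

definition G :: "real \<Rightarrow> ennreal" where
  "G r = (\<integral>\<^sup>+y\<in>{0<..r}. ennreal (y powr (q - 1) * g y) \<partial>lborel)"

lemma G_le_W_powr:
  assumes "0 < r"
  shows "G r \<le> ennreal (W r powr q)"
proof -
  have "y powr (q - 1) * g y \<le> W r powr (q - 1) * w y" if "0 < y" "y \<le> r" for y
    unfolding powr_mult_g[OF that(1)] using that one_le_q monoD[OF mono_W, of y r]
    by (intro mult_right_mono powr_mono2) (auto simp: W_nonneg nonneg)
  then have "G r \<le> (\<integral>\<^sup>+y. ennreal (W r powr (q - 1)) * (ennreal (w y) * indicator {0<..r} y) \<partial>lborel)"
    unfolding G_def
    by (intro nn_integral_mono) (auto simp: ennreal_mult'[symmetric] intro!: ennreal_leI split: split_indicator)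
  also have "\<dots> = ennreal (W r powr (q - 1) * W r)"
    by (simp add: nn_integral_cmult nn_integral_eq_W ennreal_mult')
  also have "W r powr (q - 1) * W r = W r powr q"
    using powr_add[of "W r" "q - 1" 1] W_nonneg[of r] by simp
  finally show ?thesis .
qed

lemma W_powr_le_G:
  assumes "0 < r"
  shows "ennreal ((W r / 4) powr q) \<le> G r"
proof -
  obtain x where x: "0 < x" "x \<le> r" "W r / 4 \<le> W x" "W x \<le> W r / 2"
    using W_quarter_point[OF assms] .
  define c where "c = (W r / 4) powr (q - 1)"
  have "(W r / 4) powr q = c * (W r / 4)"
    unfolding c_def using powr_add[of "W r / 4" "q - 1" 1] W_nonneg[of r] by simp
  also have "\<dots> \<le> c * (W r - W x)"
    using x by (intro mult_left_mono) (auto simp: c_def)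
  finally have "ennreal ((W r / 4) powr q) \<le> ennreal c * (\<integral>\<^sup>+y\<in>{x<..r}. ennreal (w y) \<partial>lborel)"
    using x by (simp add: nn_integral_Ioc_eq_W_diff ennreal_mult'[symmetric] c_def)
  also have "\<dots> = (\<integral>\<^sup>+y\<in>{x<..r}. ennreal (c * w y) \<partial>lborel)"
    by (simp add: nn_integral_cmult ennreal_mult' c_def mult.assoc)
  also have "\<dots> \<le> G r"
    unfolding G_def
  proof (intro nn_integral_mono)
    fix y
    have "c * w y \<le> y powr (q - 1) * g y" if "x < y" "y \<le> r"
    proof -
      have "W r / 4 \<le> W y"
        using x(3) monoD[OF mono_W, of x y] that by simp
      then show ?thesis
        unfolding c_def powr_mult_g[OF x(1)[THEN less_trans, OF that(1)]] using that x one_le_q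
        by (intro mult_right_mono powr_mono2) (auto simp: W_nonneg nonneg)
    qed
    then show "ennreal (c * w y) * indicator {x<..r} y \<le> ennreal (y powr (q - 1) * g y) * indicator {0<..r} y"
      using x(1) by (auto simp: ennreal_leI split: split_indicator)
  qed
  finally show ?thesis .
qed

lemma nn_integral_Ioc_g_div_le:
  assumes "0 < r"
  shows "(\<integral>\<^sup>+y\<in>{r<..2 * r}. ennreal (g y / y) \<partial>lborel) \<le> ennreal (g r)"
proof -
  have "(\<integral>\<^sup>+y\<in>{r<..2 * r}. ennreal (g y / y) \<partial>lborel) \<le> ennreal (g r / r * (2 * r - r))"
    using assms by (intro nn_integral_Ioc_le_const) (auto intro!: frac_le g_antimono g_nonneg)
  then show ?thesis
    using assms by simp
qed

lemma G_double_le: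
  assumes "0 < r"
  shows "G (2 * r)
         \<le> G r + ennreal ((2 * r) powr q) * (\<integral>\<^sup>+y\<in>{r<..2 * r}. ennreal (g y / y) \<partial>lborel)"
proof -
  have "y powr (q - 1) * g y \<le> (2 * r) powr q * (g y / y)" if "r < y" "y \<le> 2 * r" for y
  proof -
    have "0 < y"
      using assms that by simp
    then have "y powr (q - 1) * g y = y powr q * (g y / y)"
      by (simp add: powr_diff)
    also have "\<dots> \<le> (2 * r) powr q * (g y / y)"
      using that \<open>0 < y\<close> one_le_q g_nonneg[of y] by (intro mult_right_mono powr_mono2) auto
    finally show ?thesis .
  qed
  then have "(\<integral>\<^sup>+y\<in>{r<..2 * r}. ennreal (y powr (q - 1) * g y) \<partial>lborel)
      \<le> (\<integral>\<^sup>+y. ennreal ((2 * r) powr q) * (ennreal (g y / y) * indicator {r<..2 * r} y) \<partial>lborel)"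
    by (intro nn_integral_mono) (auto simp: ennreal_mult'[symmetric] intro!: ennreal_leI split: split_indicator)
  also have "\<dots> = ennreal ((2 * r) powr q) * (\<integral>\<^sup>+y\<in>{r<..2 * r}. ennreal (g y / y) \<partial>lborel)"
    by (simp add: nn_integral_cmult)
  finally show ?thesis
    unfolding G_def using assms nn_integral_Ioc_split[of _ 0 r "2 * r"] by (simp add: add_left_mono)
qed

definition wq :: "real \<Rightarrow> real" where
  "wq y = y powr (q - 1) * (g y - g (2 * y))"

lemma measurable_wq [measurable]: "wq \<in> borel_measurable borel"
  unfolding wq_def[abs_def] by measurable

lemma wq_nonneg: "0 < y \<Longrightarrow> 0 \<le> wq y"
  unfolding wq_def using g_antimono[of y "2 * y"] by simp

lemma weight_wq: "weight wq"
  unfolding weight_def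
proof (intro conjI allI impI)
  show "set_borel_measurable lborel {0<..} wq"
    unfolding set_borel_measurable_def by measurable
next
  fix a b :: real
  assume "0 < a"
  have "norm (wq x) \<le> b powr (q - 1) * g a" if "x \<in> {a..b}" for x
  proof -
    have "0 < x"
      using \<open>0 < a\<close> that by simp
    then have "norm (wq x) = x powr (q - 1) * (g x - g (2 * x))"
      using wq_nonneg[of x] by (simp add: wq_def)
    also have "\<dots> \<le> b powr (q - 1) * g a"
      using that \<open>0 < a\<close> \<open>0 < x\<close> one_le_q g_nonneg[of "2 * x"] g_antimono[of a x] g_antimono[of x "2 * x"]
      by (intro mult_mono powr_mono2) auto
    finally show ?thesis .
  qed
  then show "set_integrable lborel {a..b} wq"
    unfolding set_integrable_def
    by (intro integrableI_bounded_set_indicator[where B = "b powr (q - 1) * g a"])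
       (auto simp: emeasure_lborel_Icc_eq)
qed (rule wq_nonneg)

lemma nn_integral_wq_le_G: "(\<integral>\<^sup>+y\<in>{0<..r}. ennreal (wq y) \<partial>lborel) \<le> G r"
  unfolding G_def wq_def
  by (intro nn_integral_mono)
     (auto intro!: ennreal_leI mult_left_mono g_nonneg split: split_indicator)

lemma G_double_eq:
  assumes "0 < r"
  shows "ennreal (2 powr q) * G r
         = ennreal (2 powr q) * (\<integral>\<^sup>+y\<in>{0<..r}. ennreal (wq y) \<partial>lborel) + G (2 * r)"
proof -
  define K where "K = (\<integral>\<^sup>+y\<in>{0<..r}. ennreal (y powr (q - 1) * g (2 * y)) \<partial>lborel)"
  have "G r = (\<integral>\<^sup>+y\<in>{0<..r}. ennreal (wq y) + ennreal (y powr (q - 1) * g (2 * y)) \<partial>lborel)"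
    unfolding G_def
  proof (intro nn_integral_cong)
    fix y :: real
    show "ennreal (y powr (q - 1) * g y) * indicator {0<..r} y
        = (ennreal (wq y) + ennreal (y powr (q - 1) * g (2 * y))) * indicator {0<..r} y"
      using wq_nonneg[of y] g_nonneg[of "2 * y"]
      by (auto simp: wq_def ennreal_plus[symmetric] algebra_simps simp del: ennreal_plus
          split: split_indicator)
  qed
  also have "\<dots> = (\<integral>\<^sup>+y\<in>{0<..r}. ennreal (wq y) \<partial>lborel) + K"
    unfolding K_def by (subst nn_integral_add[symmetric]) (auto simp: distrib_right)
  finally have "G r = (\<integral>\<^sup>+y\<in>{0<..r}. ennreal (wq y) \<partial>lborel) + K" .
  moreover have "G (2 * r) = ennreal (2 powr q) * K"
  proof -
    have "G (2 * r) = 2 * (\<integral>\<^sup>+y\<in>{0<..r}. ennreal ((2 * y) powr (q - 1) * g (2 * y)) \<partial>lborel)"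
      unfolding G_def using nn_integral_Ioc_dilate[of _ 2 0 r] by simp
    also have "\<dots> = 2 * (\<integral>\<^sup>+y. ennreal (2 powr (q - 1))
        * (ennreal (y powr (q - 1) * g (2 * y)) * indicator {0<..r} y) \<partial>lborel)"
      using g_nonneg
      by (intro arg_cong[where f = "(*) 2"] nn_integral_cong)
         (auto simp: powr_mult ennreal_mult[symmetric] mult.assoc split: split_indicator)
    also have "\<dots> = ennreal (2 * 2 powr (q - 1)) * K"
      unfolding K_def by (simp add: nn_integral_cmult ennreal_mult mult.assoc)
    also have "2 * 2 powr (q - 1) = (2 :: real) powr q"
      using powr_add[of 2 1 "q - 1"] by simp
    finally show ?thesis .
  qed
  ultimately show ?thesis
    by (simp add: distrib_left)
qed

lemma nn_integral_wq_tail: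
  assumes "0 < r"
  shows "(\<integral>\<^sup>+x\<in>{r<..}. ennreal (wq x / x powr q) \<partial>lborel)
         = (\<integral>\<^sup>+y\<in>{r<..2 * r}. ennreal (g y / y) \<partial>lborel)"
proof -
  have "wq x / x powr q = (g x - g (2 * x)) / x" if "0 < x" for x
    using that by (simp add: wq_def powr_diff)
  then have "(\<integral>\<^sup>+x\<in>{r<..}. ennreal (wq x / x powr q) \<partial>lborel)
      = (\<integral>\<^sup>+x\<in>{r<..}. ennreal ((g x - g (2 * x)) / x) \<partial>lborel)"
    using assms by (intro set_nn_integral_cong) auto
  also have "\<dots> = (\<integral>\<^sup>+y\<in>{r<..2 * r}. ennreal (g y / y) \<partial>lborel)"
    using measurable_g g_nonneg g_antimono g_tendsto_zero assms by (rule nn_integral_Ioi_dyadic_telescope)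
  finally show ?thesis .
qed

lemma wq_integrals_le_W_powr:
  assumes "0 < r"
  shows "(\<integral>\<^sup>+x\<in>{0<..r}. ennreal (wq x) \<partial>lborel)
           + ennreal (r powr q) * (\<integral>\<^sup>+x\<in>{r<..}. ennreal (wq x / x powr q) \<partial>lborel)
         \<le> ennreal (2 * W r powr q)"
proof -
  have "ennreal (r powr q) * (\<integral>\<^sup>+x\<in>{r<..}. ennreal (wq x / x powr q) \<partial>lborel)
      \<le> ennreal (r powr q) * ennreal (g r)"
    unfolding nn_integral_wq_tail[OF assms]
    by (intro mult_left_mono nn_integral_Ioc_g_div_le assms) simp
  also have "\<dots> \<le> ennreal (W r powr q)"
    using powr_mult_g_le[OF assms] by (simp add: ennreal_mult'[symmetric])
  finally have "ennreal (r powr q) * (\<integral>\<^sup>+x\<in>{r<..}. ennreal (wq x / x powr q) \<partial>lborel)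
      \<le> ennreal (W r powr q)" .
  moreover have "(\<integral>\<^sup>+x\<in>{0<..r}. ennreal (wq x) \<partial>lborel) \<le> ennreal (W r powr q)"
    using nn_integral_wq_le_G G_le_W_powr[OF assms] by (rule order_trans)
  ultimately have "(\<integral>\<^sup>+x\<in>{0<..r}. ennreal (wq x) \<partial>lborel)
        + ennreal (r powr q) * (\<integral>\<^sup>+x\<in>{r<..}. ennreal (wq x / x powr q) \<partial>lborel)
      \<le> ennreal (W r powr q) + ennreal (W r powr q)"
    by (rule add_mono[rotated])
  also have "ennreal (W r powr q) + ennreal (W r powr q) = ennreal (2 * W r powr q)"
    by (simp add: ennreal_mult' flip: mult_2)
  finally show ?thesis .
qed

lemma G_le_wq_integrals:
  assumes "0 < r"
  shows "G r \<le> ennreal (2 powr q) * ((\<integral>\<^sup>+x\<in>{0<..r}. ennreal (wq x) \<partial>lborel)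
           + ennreal (r powr q) * (\<integral>\<^sup>+x\<in>{r<..}. ennreal (wq x / x powr q) \<partial>lborel))"
    (is "_ \<le> _ * (?H + _ * ?T)")
proof -
  define I where "I = (\<integral>\<^sup>+y\<in>{r<..2 * r}. ennreal (g y / y) \<partial>lborel)"
  have "G r + G r = ennreal 2 * G r"
    by (simp flip: mult_2)
  also have "\<dots> \<le> ennreal (2 powr q) * G r"
    using powr_mono[OF one_le_q, of 2] by (intro mult_right_mono) auto
  also have "\<dots> \<le> ennreal (2 powr q) * ?H + (G r + ennreal ((2 * r) powr q) * I)"
    unfolding G_double_eq[OF assms] I_def using G_double_le[OF assms] by (rule add_left_mono)
  also have "ennreal ((2 * r) powr q) = ennreal (2 powr q) * ennreal (r powr q)"
    using assms by (simp add: powr_mult ennreal_mult)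
  also have "ennreal (2 powr q) * ?H + (G r + ennreal (2 powr q) * ennreal (r powr q) * I)
      = G r + ennreal (2 powr q) * (?H + ennreal (r powr q) * I)"
    by (simp add: distrib_left mult.assoc add_ac)
  moreover have "G r \<noteq> \<infinity>"
    using G_le_W_powr[OF assms] by (auto simp: top_unique)
  ultimately have "G r \<le> ennreal (2 powr q) * (?H + ennreal (r powr q) * I)"
    by (simp add: ennreal_add_left_cancel_le)
  then show ?thesis
    unfolding I_def nn_integral_wq_tail[OF assms] .
qed

lemma W_powr_equivalent:
  assumes "0 < r"
  defines "R \<equiv> (\<integral>\<^sup>+x\<in>{0<..r}. ennreal (wq x) \<partial>lborel)
                 + ennreal (r powr q) * (\<integral>\<^sup>+x\<in>{r<..}. ennreal (wq x / x powr q) \<partial>lborel)"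
  shows "ennreal (W r powr q) \<le> ennreal (8 powr q) * R"
    and "R \<le> ennreal (8 powr q) * ennreal (W r powr q)"
proof -
  have "ennreal (W r powr q) = ennreal (4 powr q) * ennreal ((W r / 4) powr q)"
    using W_nonneg[of r] by (simp add: powr_divide ennreal_mult[symmetric])
  also have "\<dots> \<le> ennreal (4 powr q) * (ennreal (2 powr q) * R)"
    unfolding R_def
    using order_trans[OF W_powr_le_G G_le_wq_integrals] \<open>0 < r\<close> by (intro mult_left_mono) auto
  also have "\<dots> = ennreal (8 powr q) * R"
    by (simp add: ennreal_mult[symmetric] powr_mult[symmetric] mult.assoc[symmetric])
  finally show "ennreal (W r powr q) \<le> ennreal (8 powr q) * R" .
  have "2 \<le> (8 :: real) powr q"
    using powr_mono[OF one_le_q, of 8] by simp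
  then have "ennreal (2 * W r powr q) \<le> ennreal (8 powr q) * ennreal (W r powr q)"
    by (simp add: ennreal_mult[symmetric] mult_right_mono)
  with wq_integrals_le_W_powr[OF \<open>0 < r\<close>]
  show "R \<le> ennreal (8 powr q) * ennreal (W r powr q)"
    unfolding R_def by (rule order_trans)
qed

end

theorem lemma2p11:
  fixes w :: "real \<Rightarrow> real" and q :: real
  assumes "weight w" and "decreasing_on_pos w" and "(w \<longlongrightarrow> 0) at_top"
    and "1 \<le> q"
  shows "\<exists>wq. weight wq \<and> (\<exists>C::real. C > 1 \<and> (\<forall>r>0.
     let L = epowr (\<integral>\<^sup>+ x \<in> {0<..r}. ennreal (w x) \<partial>lborel) q;
         R = (\<integral>\<^sup>+ x \<in> {0<..r}. ennreal (wq x) \<partial>lborel)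
             + ennreal (r powr q) * (\<integral>\<^sup>+ x \<in> {r<..}. ennreal (wq x / x powr q) \<partial>lborel)
     in L \<le> ennreal C * R \<and> R \<le> ennreal C * L))"
proof -
  \<comment> \<open>a weight is only measurable on \<open>{0<..}\<close>; its zero extension \<open>v\<close> is Borel measurable\<close>
  define v where "v x = indicator {0<..} x * w x" for x :: real
  have v_integral: "(\<integral>\<^sup>+x\<in>{0<..r}. ennreal (w x) \<partial>lborel) = (\<integral>\<^sup>+x\<in>{0<..r}. ennreal (v x) \<partial>lborel)" for r
    by (rule set_nn_integral_cong) (auto simp: v_def)
  have v_measurable: "v \<in> borel_measurable borel"
    using assms(1) unfolding weight_def set_borel_measurable_def v_def[abs_def] by simp
  have v_antimono: "v y \<le> v x" if "0 < x" "x \<le> y" for x y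
    using assms(2) that unfolding decreasing_on_pos_def v_def by simp
  have "(1 :: real) < 8 powr q"
    using powr_mono[OF assms(4), of 8] by simp
  show ?thesis
  proof (cases "(\<integral>\<^sup>+x\<in>{0<..1}. ennreal (v x) \<partial>lborel) < \<infinity>")
    case True
    interpret decreasing_weight v q
    proof
      have "\<forall>\<^sub>F x in at_top. w x = v x"
        using eventually_gt_at_top[of 0] by eventually_elim (simp add: v_def)
      with assms(3) show "(v \<longlongrightarrow> 0) at_top"
        by (rule Lim_transform_eventually)
    qed (use v_measurable v_antimono True assms in \<open>auto simp: weight_def v_def\<close>)
    show ?thesis
      using weight_wq W_powr_equivalent \<open>1 < 8 powr q\<close>
      by (intro exI[of _ wq] exI[of _ "8 powr q"])
         (auto simp: Let_def v_integral nn_integral_eq_W epowr_def W_nonneg)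
  next
    case False
    then have "(\<integral>\<^sup>+x\<in>{0<..r}. ennreal (w x) \<partial>lborel) = \<infinity>" if "0 < r" for r
      using nn_integral_Ioc_zero_finite_iff[OF v_measurable v_antimono that, of 1]
      by (simp add: v_integral less_top[symmetric])
    then show ?thesis
      using assms(1) \<open>1 < 8 powr q\<close>
      by (intro exI[of _ w] exI[of _ "8 powr q"]) (auto simp: epowr_def ennreal_mult_top)
  qed
qed

end
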